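(* Let $r_0>0$ and $0<a<2r_0$, and let $\mathbf{x}_1,\dots,\mathbf{x}_n$ be i.i.d. uniformly distributed on the annulus $\{\mathbf{x}\in\mathbb{R}^2: r_0-a/2\le\|\mathbf{x}\|\le r_0+a/2\}$. Fix $\delta>0$ and $p\in(0,1]$, and set $\delta_n=\delta\, r_0\sqrt{\log n/n}$. Let $S=\{(i,j)\in[n]\times[n]: i\neq j,\ \|\mathbf{x}_i-\mathbf{x}_j\|\le\delta_n\}$ and define $\bar{\mathbf{D}}^s\in\mathbb{R}^{n\times n}$ by $\bar{\mathbf{D}}^s_{i,j}=\|\mathbf{x}_i-\mathbf{x}_j\|^2$ if $(i,j)\in S$ and $\bar{\mathbf{D}}^s_{i,j}=0$ otherwise. Let $E\subseteq[n]\times[n]$ be a random set, independent of the positions, containing each index pair $(i,j)$ independently with probability $p$, and let $\mathcal{P}_E(\mathbf{M})_{i,j}=\mathbf{M}_{i,j}$ for $(i,j)\in E$ and $0$ otherwise. Then there exists a constant $c$ (independent of $n$) such that, for all sufficiently large $n$, with probability at least $1-n^{-3}$, $$\|\mathcal{P}_E(\bar{\mathbf{D}}^s)\|_2\le c\,\delta^3(r_0+a)^2\Big(\sqrt{\tfrac{\log n}{n}}\Big)^3 p\,n .$$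
   Context: $\|\cdot\|_2$ denotes the spectral (operator) norm of a matrix; $[n]=\{1,\dots,n\}$. *)

theory Defs
  imports "HOL-Probability.Probability"
begin

definition spec_norm :: "nat \<Rightarrow> (nat \<Rightarrow> nat \<Rightarrow> real) \<Rightarrow> real" where
  "spec_norm n M = (SUP v \<in> {v :: nat \<Rightarrow> real. (\<Sum>j<n. (v j)\<^sup>2) \<le> 1}.
       sqrt (\<Sum>i<n. (\<Sum>j<n. M i j * v j)\<^sup>2))"

definition annulus :: "real \<Rightarrow> real \<Rightarrow> (real^2) set" where
  "annulus r0 a = {x. r0 - a/2 \<le> norm x \<and> norm x \<le> r0 + a/2}"

definition delta_n :: "real \<Rightarrow> real \<Rightarrow> nat \<Rightarrow> real" where
  "delta_n \<delta> r0 n = \<delta> * r0 * sqrt (ln (real n) / real n)"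

definition Dbar_s :: "real \<Rightarrow> (nat \<Rightarrow> real^2) \<Rightarrow> nat \<Rightarrow> nat \<Rightarrow> real" where
  "Dbar_s dn x i j = (if i \<noteq> j \<and> norm (x i - x j) \<le> dn then (norm (x i - x j))\<^sup>2 else 0)"

definition P_E :: "(nat \<times> nat \<Rightarrow> bool) \<Rightarrow> (nat \<Rightarrow> nat \<Rightarrow> real) \<Rightarrow> nat \<Rightarrow> nat \<Rightarrow> real" where
  "P_E E M i j = (if E (i, j) then M i j else 0)"

text \<open>Joint law: n i.i.d. uniform points on the annulus, independent of the random
  set E containing each pair (i,j) in [n]x[n] independently with probability p.\<close>
definition model :: "real \<Rightarrow> real \<Rightarrow> real \<Rightarrow> nat \<Rightarrow>
    ((nat \<Rightarrow> real^2) \<times> (nat \<times> nat \<Rightarrow> bool)) measure" where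
  "model r0 a p n =
     (PiM {..<n} (\<lambda>_. uniform_measure lborel (annulus r0 a)))
     \<Otimes>\<^sub>M (PiM ({..<n} \<times> {..<n}) (\<lambda>_. measure_pmf (bernoulli_pmf p)))"

end

theory Submission
  imports Defs "HOL-Real_Asymp.Real_Asymp"
begin

(*
  Off the diagonal the masked matrix has entries at most d^2, where d = \<delta>_n, and only between
  points at distance at most d; by the Schur test its spectral norm is therefore at most d^2 times
  the largest number of d-neighbours of a point.

  To count neighbours, tile the plane by squares of side s = sqrt (d / n). A union bound over the
  O(1/s^2) squares meeting the annulus and the (n choose 12) sets of twelve points shows that, except
  with probability 25 R^2 n d^11 / A^12 <= n^-3 (R = r0 + a/2, A the area of the annulus), no square
  holds twelve points. The d-disc around a point meets at most (2 \<lceil>d/s\<rceil> + 1)^2 <= 25 n d squares,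
  so every point has at most 275 n d neighbours and the spectral norm is at most 275 n d^3, which is
  the claim with c = 275 r0^3 / ((r0 + a)^2 p).
*)

section \<open>The Schur test for the spectral norm\<close>

lemma weighted_Cauchy_Schwarz:
  fixes w f :: "'a \<Rightarrow> real"
  assumes "\<And>j. j \<in> J \<Longrightarrow> 0 \<le> w j"
  shows "(\<Sum>j\<in>J. w j * f j)\<^sup>2 \<le> (\<Sum>j\<in>J. w j) * (\<Sum>j\<in>J. w j * (f j)\<^sup>2)"
proof -
  have "(\<Sum>j\<in>J. w j * f j)\<^sup>2 = (\<Sum>j\<in>J. sqrt (w j) * (sqrt (w j) * f j))\<^sup>2"
    using assms by (intro arg_cong[where f = "\<lambda>x. x\<^sup>2"] sum.cong) (auto simp flip: mult.assoc)
  also have "\<dots> \<le> (\<Sum>j\<in>J. (sqrt (w j))\<^sup>2) * (\<Sum>j\<in>J. (sqrt (w j) * f j)\<^sup>2)"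
    by (rule Cauchy_Schwarz_ineq_sum)
  also have "\<dots> = (\<Sum>j\<in>J. w j) * (\<Sum>j\<in>J. w j * (f j)\<^sup>2)"
    using assms by (simp add: power_mult_distrib)
  finally show ?thesis .
qed

lemma sum_mat_vec_sq_le_Schur:
  fixes M :: "nat \<Rightarrow> nat \<Rightarrow> real"
  assumes row: "\<And>i. i < n \<Longrightarrow> (\<Sum>j<n. \<bar>M i j\<bar>) \<le> R"
    and col: "\<And>j. j < n \<Longrightarrow> (\<Sum>i<n. \<bar>M i j\<bar>) \<le> C"
    and "0 \<le> R"
  shows "(\<Sum>i<n. (\<Sum>j<n. M i j * v j)\<^sup>2) \<le> R * C * (\<Sum>j<n. (v j)\<^sup>2)"
proof -
  have "(\<Sum>i<n. (\<Sum>j<n. M i j * v j)\<^sup>2) \<le> (\<Sum>i<n. (\<Sum>j<n. \<bar>M i j\<bar> * \<bar>v j\<bar>)\<^sup>2)"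
    by (intro sum_mono abs_le_square_iff[THEN iffD1] order.trans[OF sum_abs])
       (simp add: abs_mult sum_nonneg)
  also have "\<dots> \<le> (\<Sum>i<n. R * (\<Sum>j<n. \<bar>M i j\<bar> * (v j)\<^sup>2))"
  proof (rule sum_mono)
    fix i assume "i \<in> {..<n}"
    have "(\<Sum>j<n. \<bar>M i j\<bar> * \<bar>v j\<bar>)\<^sup>2 \<le> (\<Sum>j<n. \<bar>M i j\<bar>) * (\<Sum>j<n. \<bar>M i j\<bar> * \<bar>v j\<bar>\<^sup>2)"
      by (rule weighted_Cauchy_Schwarz) simp
    also have "\<dots> \<le> R * (\<Sum>j<n. \<bar>M i j\<bar> * (v j)\<^sup>2)"
      using row \<open>i \<in> {..<n}\<close> by (auto intro!: mult_right_mono sum_nonneg)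
    finally show "(\<Sum>j<n. \<bar>M i j\<bar> * \<bar>v j\<bar>)\<^sup>2 \<le> R * (\<Sum>j<n. \<bar>M i j\<bar> * (v j)\<^sup>2)" .
  qed
  also have "\<dots> = R * (\<Sum>j<n. \<Sum>i<n. \<bar>M i j\<bar> * (v j)\<^sup>2)"
    by (subst sum.swap) (simp add: sum_distrib_left)
  also have "\<dots> = R * (\<Sum>j<n. (v j)\<^sup>2 * (\<Sum>i<n. \<bar>M i j\<bar>))"
    by (simp add: sum_distrib_left mult.commute)
  also have "\<dots> \<le> R * (\<Sum>j<n. (v j)\<^sup>2 * C)"
    using col \<open>0 \<le> R\<close> by (intro mult_left_mono sum_mono) auto
  finally show ?thesis by (simp add: sum_distrib_left sum_distrib_right mult_ac)
qed

lemma spec_norm_le_Schur: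
  assumes "\<And>i. i < n \<Longrightarrow> (\<Sum>j<n. \<bar>M i j\<bar>) \<le> R"
    and "\<And>j. j < n \<Longrightarrow> (\<Sum>i<n. \<bar>M i j\<bar>) \<le> C"
    and "0 \<le> R" "0 \<le> C"
  shows "spec_norm n M \<le> sqrt (R * C)"
  unfolding spec_norm_def
proof (rule cSUP_least)
  fix v :: "nat \<Rightarrow> real" assume "v \<in> {v. (\<Sum>j<n. (v j)\<^sup>2) \<le> 1}"
  then have "R * C * (\<Sum>j<n. (v j)\<^sup>2) \<le> R * C"
    using assms(3,4) by (simp add: mult_left_le)
  with sum_mat_vec_sq_le_Schur[OF assms(1-3)]
  show "sqrt (\<Sum>i<n. (\<Sum>j<n. M i j * v j)\<^sup>2) \<le> sqrt (R * C)"
    by (meson order.trans real_sqrt_le_mono)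
qed (auto intro: exI[of _ "\<lambda>_. 0"])

lemma mat_vec_le_spec_norm:
  "L2_set (\<lambda>i. \<Sum>j<n. M i j * v j) {..<n} \<le> spec_norm n M * L2_set v {..<n}"
proof -
  let ?B = "{v :: nat \<Rightarrow> real. (\<Sum>j<n. (v j)\<^sup>2) \<le> 1}"
  define F where "F = (\<Sum>i<n. \<Sum>j<n. \<bar>M i j\<bar>)"
  have F_row: "(\<Sum>j<n. \<bar>M i j\<bar>) \<le> F" if "i < n" for i
    unfolding F_def using that by (intro member_le_sum sum_nonneg) auto
  have F_col: "(\<Sum>i<n. \<bar>M i j\<bar>) \<le> F" if "j < n" for j
    unfolding F_def using that by (intro sum_mono member_le_sum) auto
  have "bdd_above ((\<lambda>u. L2_set (\<lambda>i. \<Sum>j<n. M i j * u j) {..<n}) ` ?B)"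
  proof (rule bdd_aboveI2)
    fix u assume "u \<in> ?B"
    have "(\<Sum>i<n. (\<Sum>j<n. M i j * u j)\<^sup>2) \<le> F * F * (\<Sum>j<n. (u j)\<^sup>2)"
      by (rule sum_mat_vec_sq_le_Schur[OF F_row F_col]) (auto simp: F_def intro: sum_nonneg)
    also have "\<dots> \<le> F\<^sup>2"
      using \<open>u \<in> ?B\<close> by (simp add: F_def mult_left_le sum_nonneg power2_eq_square)
    finally show "L2_set (\<lambda>i. \<Sum>j<n. M i j * u j) {..<n} \<le> \<bar>F\<bar>"
      unfolding L2_set_def by (metis real_sqrt_abs real_sqrt_le_mono)
  qed
  then have sup: "L2_set (\<lambda>i. \<Sum>j<n. M i j * u j) {..<n} \<le> spec_norm n M" if "u \<in> ?B" for u
    using cSUP_upper[OF that] by (simp add: spec_norm_def L2_set_def)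
  show ?thesis
  proof (cases "L2_set v {..<n} = 0")
    case True
    then show ?thesis by (simp add: L2_set_eq_0_iff L2_set_0')
  next
    case False
    define c where "c = L2_set v {..<n}"
    have c: "c > 0" using False by (simp add: c_def order_le_neq_trans)
    have "(\<lambda>j. v j / c) \<in> ?B"
      using c by (simp add: c_def L2_set_def power_divide flip: sum_divide_distrib)
    then have "c * L2_set (\<lambda>i. \<Sum>j<n. M i j * (v j / c)) {..<n} \<le> c * spec_norm n M"
      using mult_left_mono[OF sup, of "\<lambda>j. v j / c" c] c by simp
    moreover have "c * L2_set (\<lambda>i. \<Sum>j<n. M i j * (v j / c)) {..<n} = L2_set (\<lambda>i. \<Sum>j<n. M i j * v j) {..<n}"
      using c by (subst L2_set_right_distrib) (simp_all add: sum_distrib_left)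
    ultimately show ?thesis by (simp add: c_def mult.commute)
  qed
qed

section \<open>Measurability of spectral-norm events\<close>

lemma Rats_vector_approximation:
  obtains w :: "nat \<Rightarrow> nat \<Rightarrow> real"
  where "\<And>k. w k \<in> {..<n} \<rightarrow>\<^sub>E \<rat>" "\<And>j. j < n \<Longrightarrow> (\<lambda>k. w k j) \<longlonglongrightarrow> v j"
proof -
  have "\<forall>j. \<exists>f. (\<forall>k. f k \<in> \<rat>) \<and> f \<longlonglongrightarrow> v j"
    using Rats_closure_real closure_sequential by blast
  then obtain f where f: "\<And>j k. f j k \<in> \<rat>" "\<And>j. f j \<longlonglongrightarrow> v j"
    by metis
  show ?thesis
    by (rule that[of "\<lambda>k. restrict (\<lambda>j. f j k) {..<n}"]) (auto simp: f)
qed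

text \<open>A countable description of the sublevel sets of \<open>spec_norm\<close>, which makes them measurable.\<close>

lemma spec_norm_le_iff_Rats:
  assumes "0 \<le> t"
  shows "spec_norm n M \<le> t \<longleftrightarrow>
    (\<forall>v \<in> {..<n} \<rightarrow>\<^sub>E \<rat>. L2_set (\<lambda>i. \<Sum>j<n. M i j * v j) {..<n} \<le> t * L2_set v {..<n})"
proof
  assume "spec_norm n M \<le> t"
  then show "\<forall>v \<in> {..<n} \<rightarrow>\<^sub>E \<rat>. L2_set (\<lambda>i. \<Sum>j<n. M i j * v j) {..<n} \<le> t * L2_set v {..<n}"
    using order.trans[OF mat_vec_le_spec_norm mult_right_mono[OF _ L2_set_nonneg]] by blast
next
  assume Rats: "\<forall>v \<in> {..<n} \<rightarrow>\<^sub>E \<rat>. L2_set (\<lambda>i. \<Sum>j<n. M i j * v j) {..<n} \<le> t * L2_set v {..<n}"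
  show "spec_norm n M \<le> t"
    unfolding spec_norm_def
  proof (rule cSUP_least)
    fix v :: "nat \<Rightarrow> real" assume "v \<in> {v. (\<Sum>j<n. (v j)\<^sup>2) \<le> 1}"
    then have "L2_set v {..<n} \<le> 1"
      by (simp add: L2_set_def)
    obtain w where w: "\<And>k. w k \<in> {..<n} \<rightarrow>\<^sub>E \<rat>" "\<And>j. j < n \<Longrightarrow> (\<lambda>k. w k j) \<longlonglongrightarrow> v j"
      using Rats_vector_approximation[of n v] by blast
    have "(\<lambda>k. t * L2_set (w k) {..<n} - L2_set (\<lambda>i. \<Sum>j<n. M i j * w k j) {..<n})
        \<longlonglongrightarrow> t * L2_set v {..<n} - L2_set (\<lambda>i. \<Sum>j<n. M i j * v j) {..<n}"
      unfolding L2_set_def by (intro tendsto_intros) (auto intro: w)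
    then have "0 \<le> t * L2_set v {..<n} - L2_set (\<lambda>i. \<Sum>j<n. M i j * v j) {..<n}"
      by (rule LIMSEQ_le_const) (use Rats w(1) in auto)
    then have "L2_set (\<lambda>i. \<Sum>j<n. M i j * v j) {..<n} \<le> t * L2_set v {..<n}"
      by simp
    also have "\<dots> \<le> t"
      using \<open>L2_set v {..<n} \<le> 1\<close> assms by (simp add: mult_left_le)
    finally show "sqrt (\<Sum>i<n. (\<Sum>j<n. M i j * v j)\<^sup>2) \<le> t"
      by (simp add: L2_set_def)
  qed (auto intro: exI[of _ "\<lambda>_. 0"])
qed

lemma sets_spec_norm_le:
  assumes "\<And>i j. i < n \<Longrightarrow> j < n \<Longrightarrow> (\<lambda>\<omega>. A \<omega> i j) \<in> borel_measurable M" and "0 \<le> t"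
  shows "{\<omega> \<in> space M. spec_norm n (A \<omega>) \<le> t} \<in> sets M"
proof -
  have "countable ({..<n} \<rightarrow>\<^sub>E (\<rat> :: real set))"
    by (intro countable_PiE countable_rat) simp
  moreover have "{\<omega> \<in> space M. L2_set (\<lambda>i. \<Sum>j<n. A \<omega> i j * v j) {..<n} \<le> t * L2_set v {..<n}} \<in> sets M"
    for v :: "nat \<Rightarrow> real"
    using assms(1) unfolding L2_set_def by measurable
  ultimately show ?thesis
    by (simp add: spec_norm_le_iff_Rats[OF assms(2)] sets.sets_Collect_countable_All')
qed

section \<open>Grid cells and neighbour counts\<close>

definition cell_index :: "real \<Rightarrow> real^2 \<Rightarrow> int \<times> int" where
  "cell_index s x = (\<lfloor>x$1 / s\<rfloor>, \<lfloor>x$2 / s\<rfloor>)"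

definition grid_cell :: "real \<Rightarrow> int \<times> int \<Rightarrow> (real^2) set" where
  "grid_cell s k = cbox (\<chi> i. of_int (if i = 1 then fst k else snd k) * s)
                        (\<chi> i. (of_int (if i = 1 then fst k else snd k) + 1) * s)"

definition cell_block :: "int \<times> int \<Rightarrow> int \<Rightarrow> (int \<times> int) set" where
  "cell_block c N = {fst c - N .. fst c + N} \<times> {snd c - N .. snd c + N}"

lemma card_cell_block: "card (cell_block c N) = (nat (2 * N + 1))\<^sup>2"
  by (simp add: cell_block_def power2_eq_square)

lemma mem_grid_cell_index:
  assumes "s > 0"
  shows "x \<in> grid_cell s (cell_index s x)"
  using floor_divide_lower[OF assms] floor_divide_upper[OF assms, THEN less_imp_le]
  by (auto simp: grid_cell_def cell_index_def mem_box_cart forall_2)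

lemma measure_grid_cell:
  assumes "s > 0"
  shows "measure lborel (grid_cell s k) = s\<^sup>2"
proof -
  have "grid_cell s k \<noteq> {}"
    using assms by (auto simp: grid_cell_def interval_ne_empty_cart)
  then show ?thesis
    by (simp add: grid_cell_def content_cbox_cart UNIV_2 power2_eq_square algebra_simps)
qed

lemma floor_divide_diff_le:
  fixes s t u d :: real
  assumes "s > 0" "\<bar>t - u\<bar> \<le> d"
  shows "\<bar>\<lfloor>u / s\<rfloor> - \<lfloor>t / s\<rfloor>\<bar> \<le> \<lceil>d / s\<rceil>"
proof -
  have "\<bar>u / s - t / s\<bar> \<le> d / s"
    using assms by (simp add: abs_minus_commute divide_right_mono flip: diff_divide_distrib)
  then have "\<bar>of_int (\<lfloor>u / s\<rfloor> - \<lfloor>t / s\<rfloor>)\<bar> < d / s + 1"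
    by linarith
  then show ?thesis
    by linarith
qed

lemma cell_index_mem_cell_block:
  assumes "s > 0" "norm (x - y) \<le> d"
  shows "cell_index s y \<in> cell_block (cell_index s x) \<lceil>d / s\<rceil>"
proof -
  have "\<bar>\<lfloor>y$i / s\<rfloor> - \<lfloor>x$i / s\<rfloor>\<bar> \<le> \<lceil>d / s\<rceil>" for i
    using floor_divide_diff_le[OF assms(1)] component_le_norm_cart[of "x - y" i] assms(2) by simp
  from this[of 1] this[of 2] show ?thesis
    by (auto simp: cell_block_def cell_index_def abs_le_iff)
qed

lemma card_near_le:
  fixes x :: "nat \<Rightarrow> real^2"
  assumes "s > 0" and sparse: "\<And>k. card {j. j < n \<and> cell_index s (x j) = k} \<le> m"
  shows "card {j. j < n \<and> norm (x i - x j) \<le> d} \<le> m * (nat (2 * \<lceil>d / s\<rceil> + 1))\<^sup>2"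
proof -
  let ?B = "cell_block (cell_index s (x i)) \<lceil>d / s\<rceil>"
  have "{j. j < n \<and> norm (x i - x j) \<le> d} \<subseteq> (\<Union>k\<in>?B. {j. j < n \<and> cell_index s (x j) = k})"
    using cell_index_mem_cell_block[OF assms(1)] by blast
  then have "card {j. j < n \<and> norm (x i - x j) \<le> d} \<le> card (\<Union>k\<in>?B. {j. j < n \<and> cell_index s (x j) = k})"
    by (intro card_mono) (auto simp: cell_block_def)
  also have "\<dots> \<le> (\<Sum>k\<in>?B. card {j. j < n \<and> cell_index s (x j) = k})"
    by (rule card_UN_le) (simp add: cell_block_def)
  also have "\<dots> \<le> m * card ?B"
    using sum_bounded_above[of ?B _ m] sparse by (simp add: mult.commute)
  finally show ?thesis
    by (simp add: card_cell_block)
qed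

lemma Dbar_s_commute: "Dbar_s d x i j = Dbar_s d x j i"
  by (auto simp: Dbar_s_def norm_minus_commute)

lemma sum_abs_sparse_distances_le:
  fixes x :: "nat \<Rightarrow> real^2"
  assumes "card {j. j < n \<and> norm (x i - x j) \<le> d} \<le> D"
  shows "(\<Sum>j<n. \<bar>P_E E (Dbar_s d x) i j\<bar>) \<le> d\<^sup>2 * real D"
proof -
  have "(\<Sum>j<n. \<bar>P_E E (Dbar_s d x) i j\<bar>) \<le> (\<Sum>j<n. if norm (x i - x j) \<le> d then d\<^sup>2 else 0)"
    by (intro sum_mono) (auto simp: P_E_def Dbar_s_def intro: power_mono)
  also have "\<dots> = d\<^sup>2 * real (card {j. j < n \<and> norm (x i - x j) \<le> d})"
    by (simp add: sum.If_cases Int_def conj_commute)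
  also have "\<dots> \<le> d\<^sup>2 * real D"
    using assms by (simp add: mult_left_mono)
  finally show ?thesis .
qed

lemma spec_norm_sparse_distances_le:
  fixes x :: "nat \<Rightarrow> real^2"
  assumes near: "\<And>i. i < n \<Longrightarrow> card {j. j < n \<and> norm (x i - x j) \<le> d} \<le> D"
  shows "spec_norm n (P_E E (Dbar_s d x)) \<le> d\<^sup>2 * real D"
proof -
  have col: "(\<Sum>i<n. \<bar>P_E E (Dbar_s d x) i j\<bar>) \<le> d\<^sup>2 * real D" if "j < n" for j
  proof -
    have "P_E E (Dbar_s d x) i j = P_E (\<lambda>(i, j). E (j, i)) (Dbar_s d x) j i" for i
      by (simp add: P_E_def Dbar_s_commute[of d x i j])
    then have "(\<Sum>i<n. \<bar>P_E E (Dbar_s d x) i j\<bar>) = (\<Sum>i<n. \<bar>P_E (\<lambda>(i, j). E (j, i)) (Dbar_s d x) j i\<bar>)"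
      by simp
    also have "\<dots> \<le> d\<^sup>2 * real D"
      by (rule sum_abs_sparse_distances_le[OF near[OF that]])
    finally show ?thesis .
  qed
  have "spec_norm n (P_E E (Dbar_s d x)) \<le> sqrt (d\<^sup>2 * real D * (d\<^sup>2 * real D))"
    by (rule spec_norm_le_Schur[OF sum_abs_sparse_distances_le[OF near] col]) auto
  then show ?thesis
    by (simp add: real_sqrt_mult)
qed

section \<open>Crowded cells of a uniform sample on the annulus\<close>

lemma annulus_sets [measurable]: "annulus r0 a \<in> sets borel"
  unfolding annulus_def by measurable

lemma emeasure_annulus_finite: "emeasure lborel (annulus r0 a) < \<infinity>"
  by (rule emeasure_bounded_finite, rule bounded_subset[OF bounded_cball[of 0 "r0 + a/2"]])
     (auto simp: annulus_def)

lemma measure_annulus_pos: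
  assumes "0 < a" "a < 2 * r0"
  shows "measure lborel (annulus r0 a) > 0"
proof -
  have "0 \<le> r0"
    using assms by linarith
  then obtain c :: "real^2" where c: "norm c = r0"
    by (rule vector_choose_size)
  have "cball c (a/2) \<subseteq> annulus r0 a"
  proof
    fix y assume "y \<in> cball c (a/2)"
    then have "norm (c - y) \<le> a/2" by (simp add: dist_norm)
    moreover have "norm c - norm (c - y) \<le> norm y" "norm y \<le> norm c + norm (c - y)"
      using norm_triangle_ineq2[of c "c - y"] norm_triangle_ineq4[of c "c - y"] by simp_all
    ultimately show "y \<in> annulus r0 a"
      using c by (simp add: annulus_def)
  qed
  then have "measure lborel (cball c (a/2)) \<le> measure lborel (annulus r0 a)"
    by (rule measure_mono_fmeasurable) (use emeasure_annulus_finite in \<open>auto simp: fmeasurable_def\<close>)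
  moreover have "measure lborel (cball c (a/2)) > 0"
    using assms by (intro content_cball_pos) simp
  ultimately show ?thesis by linarith
qed

definition annulus_sample :: "real \<Rightarrow> real \<Rightarrow> nat \<Rightarrow> (nat \<Rightarrow> real^2) measure" where
  "annulus_sample r0 a n = PiM {..<n} (\<lambda>_. uniform_measure lborel (annulus r0 a))"

definition points_in :: "real \<Rightarrow> real \<Rightarrow> nat \<Rightarrow> nat set \<Rightarrow> (real^2) set \<Rightarrow> (nat \<Rightarrow> real^2) set" where
  "points_in r0 a n T C = prod_emb {..<n} (\<lambda>_. uniform_measure lborel (annulus r0 a)) T (T \<rightarrow>\<^sub>E C)"

text \<open>Only the cells meeting the disc of radius \<open>r0 + a/2\<close> are considered: the sample lies in the
  annulus except on the null event \<open>off_annulus\<close>.\<close>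

definition crowded :: "real \<Rightarrow> real \<Rightarrow> nat \<Rightarrow> real \<Rightarrow> nat \<Rightarrow> (nat \<Rightarrow> real^2) set" where
  "crowded r0 a n s m = (\<Union>k \<in> cell_block (0, 0) \<lceil>(r0 + a/2) / s\<rceil>.
     \<Union>T \<in> {T. T \<subseteq> {..<n} \<and> card T = m}. points_in r0 a n T (grid_cell s k))"

definition off_annulus :: "real \<Rightarrow> real \<Rightarrow> nat \<Rightarrow> (nat \<Rightarrow> real^2) set" where
  "off_annulus r0 a n = (\<Union>j<n. points_in r0 a n {j} (- annulus r0 a))"

lemma mem_points_in:
  assumes "x \<in> space (annulus_sample r0 a n)" "T \<subseteq> {..<n}"
  shows "x \<in> points_in r0 a n T C \<longleftrightarrow> (\<forall>j\<in>T. x j \<in> C)"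
  using assms by (auto simp: points_in_def annulus_sample_def prod_emb_iff space_PiM PiE_iff)

context
  fixes r0 a :: real
  assumes a: "0 < a" "a < 2 * r0"
begin

lemma prob_space_uniform_annulus: "prob_space (uniform_measure lborel (annulus r0 a))"
  using measure_annulus_pos[OF a] emeasure_annulus_finite[of r0 a]
  by (intro prob_space_uniform_measure) (auto simp: measure_def)

lemma measure_uniform_annulus_le:
  assumes "C \<in> sets borel" "emeasure lborel C < \<infinity>"
  shows "measure (uniform_measure lborel (annulus r0 a)) C \<le> measure lborel C / measure lborel (annulus r0 a)"
proof -
  have "measure (uniform_measure lborel (annulus r0 a)) C
      = measure lborel (annulus r0 a \<inter> C) / measure lborel (annulus r0 a)"
    using measure_annulus_pos[OF a] emeasure_annulus_finite[of r0 a] assms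
    by (intro measure_uniform_measure) (auto simp: measure_def)
  also have "\<dots> \<le> measure lborel C / measure lborel (annulus r0 a)"
    using assms measure_annulus_pos[OF a]
    by (intro divide_right_mono measure_mono_fmeasurable) (auto simp: fmeasurable_def)
  finally show ?thesis .
qed

lemma points_in_sets:
  assumes "T \<subseteq> {..<n}" "C \<in> sets borel"
  shows "points_in r0 a n T C \<in> sets (annulus_sample r0 a n)"
  unfolding points_in_def annulus_sample_def
  using assms finite_subset[OF assms(1)] by (intro sets_PiM_I) auto

lemma crowded_sets: "crowded r0 a n s m \<in> sets (annulus_sample r0 a n)"
  unfolding crowded_def using points_in_sets
  by (intro sets.finite_UN) (auto simp: cell_block_def grid_cell_def intro: finite_subset[of _ "Pow {..<n}"])

lemma off_annulus_sets: "off_annulus r0 a n \<in> sets (annulus_sample r0 a n)"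
  unfolding off_annulus_def using points_in_sets by (intro sets.finite_UN) auto

lemma measure_points_in:
  assumes "T \<subseteq> {..<n}" "C \<in> sets borel"
  shows "measure (annulus_sample r0 a n) (points_in r0 a n T C)
    = measure (uniform_measure lborel (annulus r0 a)) C ^ card T"
proof -
  interpret product_prob_space "\<lambda>_. uniform_measure lborel (annulus r0 a)" "{..<n}"
    using prob_space_uniform_annulus
    by (simp add: product_prob_space_def product_sigma_finite_def product_prob_space_axioms_def
        prob_space_imp_sigma_finite)
  show ?thesis
    unfolding points_in_def annulus_sample_def
    using assms finite_subset[OF assms(1)] by (subst measure_PiM_emb) auto
qed

lemma measure_off_annulus: "measure (annulus_sample r0 a n) (off_annulus r0 a n) = 0"
proof -
  have "measure (uniform_measure lborel (annulus r0 a)) (- annulus r0 a) = 0"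
    using measure_annulus_pos[OF a] emeasure_annulus_finite[of r0 a]
    by (subst measure_uniform_measure) (auto simp: measure_def)
  then have "measure (annulus_sample r0 a n) (points_in r0 a n {j} (- annulus r0 a)) = 0" if "j < n" for j
    using that by (simp add: measure_points_in)
  then show ?thesis
    unfolding off_annulus_def using points_in_sets
    by (intro antisym order.trans[OF measure_UNION_le]) (auto simp: sum_nonneg)
qed

lemma measure_crowded_le:
  assumes "s > 0"
  shows "measure (annulus_sample r0 a n) (crowded r0 a n s m)
    \<le> real ((nat (2 * \<lceil>(r0 + a/2) / s\<rceil> + 1))\<^sup>2) * real (n choose m)
        * (s\<^sup>2 / measure lborel (annulus r0 a)) ^ m"
proof -
  let ?M = "annulus_sample r0 a n" and ?K = "cell_block (0, 0) \<lceil>(r0 + a/2) / s\<rceil>"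
    and ?TT = "{T. T \<subseteq> {..<n} \<and> card T = m}"
  have fin: "finite ?K" "finite ?TT"
    by (auto simp: cell_block_def intro: finite_subset[of _ "Pow {..<n}"])
  have cell: "grid_cell s k \<in> sets borel" "emeasure lborel (grid_cell s k) < \<infinity>" for k
    unfolding grid_cell_def by (simp, rule emeasure_lborel_cbox_finite)
  have each: "measure ?M (points_in r0 a n T (grid_cell s k)) \<le> (s\<^sup>2 / measure lborel (annulus r0 a)) ^ m"
    if "T \<in> ?TT" for k T
  proof -
    have "measure (uniform_measure lborel (annulus r0 a)) (grid_cell s k) \<le> s\<^sup>2 / measure lborel (annulus r0 a)"
      using measure_uniform_annulus_le[OF cell(1,2)[of k]] measure_grid_cell[OF assms, of k] by simp
    then show ?thesis
      using that by (auto simp: measure_points_in cell(1) intro!: power_mono)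
  qed
  have "measure ?M (crowded r0 a n s m) \<le> (\<Sum>k\<in>?K. measure ?M (\<Union>T\<in>?TT. points_in r0 a n T (grid_cell s k)))"
    unfolding crowded_def using fin points_in_sets cell
    by (intro measure_UNION_le sets.finite_UN) auto
  also have "\<dots> \<le> (\<Sum>k\<in>?K. \<Sum>T\<in>?TT. measure ?M (points_in r0 a n T (grid_cell s k)))"
    using fin points_in_sets cell by (intro sum_mono measure_UNION_le) auto
  also have "\<dots> \<le> (\<Sum>k\<in>?K. \<Sum>T\<in>?TT. (s\<^sup>2 / measure lborel (annulus r0 a)) ^ m)"
    using each by (intro sum_mono) auto
  also have "\<dots> = real (card ?K) * real (n choose m) * (s\<^sup>2 / measure lborel (annulus r0 a)) ^ m"
    using n_subsets[of "{..<n}" m] by simp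
  finally show ?thesis
    by (simp add: card_cell_block)
qed

lemma card_cell_le_if_not_crowded:
  assumes "s > 0" and x: "x \<in> space (annulus_sample r0 a n) - (crowded r0 a n s (Suc m) \<union> off_annulus r0 a n)"
  shows "card {j. j < n \<and> cell_index s (x j) = k} \<le> m"
proof (rule ccontr)
  assume "\<not> ?thesis"
  then obtain T where T: "T \<subseteq> {j. j < n \<and> cell_index s (x j) = k}" "card T = Suc m"
    by (meson not_less_eq_eq obtain_subset_with_card_n)
  then obtain j where j: "j \<in> T"
    by fastforce
  have "x \<notin> points_in r0 a n {j} (- annulus r0 a)"
    using x j T by (auto simp: off_annulus_def)
  then have "norm (0 - x j) \<le> r0 + a/2"
    using x j T by (auto simp: mem_points_in annulus_def)
  then have "cell_index s (x j) \<in> cell_block (cell_index s 0) \<lceil>(r0 + a/2) / s\<rceil>"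
    by (rule cell_index_mem_cell_block[OF assms(1)])
  moreover have "cell_index s (x j) = k"
    using j T by auto
  ultimately have "k \<in> cell_block (0, 0) \<lceil>(r0 + a/2) / s\<rceil>"
    by (simp add: cell_index_def)
  moreover have "x \<in> points_in r0 a n T (grid_cell s k)"
    using x T mem_grid_cell_index[OF assms(1)] by (subst mem_points_in) auto
  ultimately show False
    using x T by (auto simp: crowded_def)
qed

lemma spec_norm_le_if_not_crowded:
  assumes "s > 0" "x \<in> space (annulus_sample r0 a n) - (crowded r0 a n s (Suc m) \<union> off_annulus r0 a n)"
  shows "spec_norm n (P_E E (Dbar_s d x)) \<le> d\<^sup>2 * real (m * (nat (2 * \<lceil>d / s\<rceil> + 1))\<^sup>2)"
  using assms by (intro spec_norm_sparse_distances_le card_near_le card_cell_le_if_not_crowded)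

lemma measure_crowded_or_off_annulus_le:
  assumes "s > 0"
  shows "measure (annulus_sample r0 a n) (crowded r0 a n s m \<union> off_annulus r0 a n)
    \<le> real ((nat (2 * \<lceil>(r0 + a/2) / s\<rceil> + 1))\<^sup>2) * real (n choose m)
        * (s\<^sup>2 / measure lborel (annulus r0 a)) ^ m"
  using measure_Un_le[OF crowded_sets off_annulus_sets, of n s m] measure_crowded_le[OF assms, of n m]
    measure_off_annulus[of n]
  by linarith

end

section \<open>The tail bound\<close>

lemma measurable_model_entry:
  assumes "i < n" "j < n"
  shows "(\<lambda>\<omega>. P_E (snd \<omega>) (Dbar_s d (fst \<omega>)) i j) \<in> borel_measurable (model r0 a p n)"
proof -
  have [measurable]: "(\<lambda>\<omega>. fst \<omega> k) \<in> borel_measurable (model r0 a p n)" if "k < n" for k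
    unfolding model_def by measurable (use that in auto)
  have "(\<lambda>\<omega>. snd \<omega> (i, j)) \<in> measurable (model r0 a p n) (measure_pmf (bernoulli_pmf p))"
    unfolding model_def by measurable (use assms in auto)
  then have [measurable]: "(\<lambda>\<omega>. snd \<omega> (i, j)) \<in> measurable (model r0 a p n) (count_space UNIV)"
    by (simp add: measurable_def)
  show ?thesis
    unfolding P_E_def Dbar_s_def using assms by measurable
qed

lemma prob_spec_norm_le:
  assumes a: "0 < a" "a < 2 * r0" and "s > 0"
    and t: "dn\<^sup>2 * real (m * (nat (2 * \<lceil>dn / s\<rceil> + 1))\<^sup>2) \<le> t"
  shows "1 - real ((nat (2 * \<lceil>(r0 + a/2) / s\<rceil> + 1))\<^sup>2) * real (n choose Suc m)
             * (s\<^sup>2 / measure lborel (annulus r0 a)) ^ Suc m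
    \<le> measure (model r0 a p n)
        {\<omega> \<in> space (model r0 a p n). spec_norm n (P_E (snd \<omega>) (Dbar_s dn (fst \<omega>))) \<le> t}"
    (is "1 - ?bound \<le> measure _ ?G")
proof -
  let ?S = "annulus_sample r0 a n"
    and ?E = "PiM ({..<n} \<times> {..<n}) (\<lambda>_. measure_pmf (bernoulli_pmf p))"
    and ?B = "crowded r0 a n s (Suc m) \<union> off_annulus r0 a n"
  have model: "model r0 a p n = ?S \<Otimes>\<^sub>M ?E"
    by (simp add: model_def annulus_sample_def)
  interpret S: prob_space ?S
    unfolding annulus_sample_def by (intro prob_space_PiM prob_space_uniform_annulus[OF a])
  interpret E: prob_space ?E
    by (intro prob_space_PiM prob_space_measure_pmf)
  interpret pair_prob_space ?S ?E ..
  have B: "?B \<in> sets ?S"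
    using crowded_sets[OF a] off_annulus_sets[OF a] by simp
  have "1 - ?bound \<le> measure ?S (space ?S - ?B)"
    using S.prob_compl[OF B] measure_crowded_or_off_annulus_le[OF a \<open>s > 0\<close>, of n "Suc m"] by linarith
  also have "\<dots> = measure (model r0 a p n) ((space ?S - ?B) \<times> space ?E)"
    using B by (simp add: model measure_def E.emeasure_pair_measure_Times E.emeasure_space_1)
  also have "\<dots> \<le> measure (model r0 a p n) ?G"
  proof (rule P.finite_measure_mono[folded model])
    show "?G \<in> sets (model r0 a p n)"
      using order.trans[OF _ t] by (intro sets_spec_norm_le measurable_model_entry) auto
    show "(space ?S - ?B) \<times> space ?E \<subseteq> ?G"
    proof
      fix \<omega> assume \<omega>: "\<omega> \<in> (space ?S - ?B) \<times> space ?E"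
      then have "fst \<omega> \<in> space ?S - ?B"
        by auto
      then have "spec_norm n (P_E (snd \<omega>) (Dbar_s dn (fst \<omega>))) \<le> t"
        by (rule order.trans[OF spec_norm_le_if_not_crowded[OF a \<open>s > 0\<close>] t])
      then show "\<omega> \<in> ?G"
        using \<omega> by (auto simp: model space_pair_measure)
    qed
  qed
  finally show ?thesis .
qed

lemma real_nat_two_ceiling_sq_le:
  fixes w :: real
  assumes "1 \<le> w"
  shows "real ((nat (2 * \<lceil>w\<rceil> + 1))\<^sup>2) \<le> 25 * w\<^sup>2"
proof -
  have "real (nat (2 * \<lceil>w\<rceil> + 1)) = 2 * of_int \<lceil>w\<rceil> + 1"
    using assms by simp
  also have "\<dots> \<le> 5 * w"
    using of_int_ceiling_le_add_one[of w] assms by linarith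
  finally have "(real (nat (2 * \<lceil>w\<rceil> + 1)))\<^sup>2 \<le> (5 * w)\<^sup>2"
    by (rule power_mono) simp
  then show ?thesis
    by (simp add: power_mult_distrib)
qed

lemma degree_bound_le:
  fixes dn x :: real
  assumes "0 < dn" "0 < x" "1 \<le> dn * x"
  shows "dn\<^sup>2 * real (11 * (nat (2 * \<lceil>dn / sqrt (dn / x)\<rceil> + 1))\<^sup>2) \<le> 275 * dn ^ 3 * x"
proof -
  have "dn / sqrt (dn / x) = sqrt (dn * x)"
    using assms by (simp add: real_sqrt_divide real_sqrt_mult field_simps)
  moreover have "real ((nat (2 * \<lceil>sqrt (dn * x)\<rceil> + 1))\<^sup>2) \<le> 25 * (dn * x)"
    using real_nat_two_ceiling_sq_le[of "sqrt (dn * x)"] assms by simp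
  ultimately have "dn\<^sup>2 * (11 * real ((nat (2 * \<lceil>dn / sqrt (dn / x)\<rceil> + 1))\<^sup>2)) \<le> dn\<^sup>2 * (11 * (25 * (dn * x)))"
    by (intro mult_left_mono) auto
  then show ?thesis
    by (simp add: power2_eq_square power3_eq_cube mult_ac)
qed

lemma crowding_bound_le:
  fixes dn R A :: real
  assumes "12 \<le> n" "0 < dn" "0 < R" "0 < A" "dn / n \<le> R\<^sup>2" "25 * R\<^sup>2 * real n ^ 4 * dn ^ 11 \<le> A ^ 12"
  shows "real ((nat (2 * \<lceil>R / sqrt (dn / n)\<rceil> + 1))\<^sup>2) * real (n choose 12) * ((sqrt (dn / n))\<^sup>2 / A) ^ 12
    \<le> real n powr -3"
proof -
  define s where "s = sqrt (dn / n)"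
  have n: "real n > 0"
    using assms(1) by simp
  have s: "s > 0" "s\<^sup>2 = dn / n"
    using assms(2) n by (simp_all add: s_def)
  have "s \<le> R"
    using real_sqrt_le_mono[OF assms(5)] assms(3) by (simp add: s_def)
  then have "real ((nat (2 * \<lceil>R / s\<rceil> + 1))\<^sup>2) \<le> 25 * (R / s)\<^sup>2"
    using s by (intro real_nat_two_ceiling_sq_le) simp
  also have "(R / s)\<^sup>2 = R\<^sup>2 * n / dn"
    using s n by (simp add: power_divide)
  finally have K: "real ((nat (2 * \<lceil>R / s\<rceil> + 1))\<^sup>2) \<le> 25 * (R\<^sup>2 * n / dn)" .
  have C: "real (n choose 12) \<le> real n ^ 12"
    using binomial_le_pow[OF assms(1)] by (simp flip: of_nat_power)
  have "real ((nat (2 * \<lceil>R / s\<rceil> + 1))\<^sup>2) * real (n choose 12) * (s\<^sup>2 / A) ^ 12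
      \<le> 25 * (R\<^sup>2 * n / dn) * real n ^ 12 * ((dn / n) / A) ^ 12"
    using K C s(2) assms(2,4) by (intro mult_mono) auto
  also have "\<dots> = 25 * R\<^sup>2 * real n * dn ^ 11 / A ^ 12"
  proof -
    have "dn ^ 12 = dn * dn ^ 11"
      by (subst power_Suc[symmetric]) simp
    then show ?thesis
      using n assms(2,4) by (simp add: power_divide field_simps)
  qed
  also have "\<dots> \<le> 1 / real n ^ 3"
  proof -
    have "real n ^ 4 = real n * real n ^ 3"
      by (subst power_Suc[symmetric]) simp
    then show ?thesis
      using assms(4,6) n by (simp add: field_simps)
  qed
  also have "\<dots> = real n powr -3"
    using n by (simp add: powr_minus powr_realpow divide_inverse)
  finally show ?thesis
    by (simp add: s_def)
qed

lemma eventually_sample_conditions: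
  fixes d R A :: real
  assumes "0 < d" "0 < R" "0 < A"
  shows "eventually (\<lambda>n. 12 \<le> n \<and> 1 \<le> d * sqrt (ln n / n) * n \<and> d * sqrt (ln n / n) / n \<le> R\<^sup>2
    \<and> 25 * R\<^sup>2 * real n ^ 4 * (d * sqrt (ln n / n)) ^ 11 \<le> A ^ 12) sequentially"
proof -
  have "eventually (\<lambda>x. 1 \<le> d * sqrt (ln x / x) * x) at_top"
    "eventually (\<lambda>x. d * sqrt (ln x / x) / x \<le> R\<^sup>2) at_top"
    "eventually (\<lambda>x. 25 * R\<^sup>2 * x ^ 4 * (d * sqrt (ln x / x)) ^ 11 \<le> A ^ 12) at_top"
    using assms by real_asymp+
  then have "eventually (\<lambda>x. 1 \<le> d * sqrt (ln x / x) * x \<and> d * sqrt (ln x / x) / x \<le> R\<^sup>2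
    \<and> 25 * R\<^sup>2 * x ^ 4 * (d * sqrt (ln x / x)) ^ 11 \<le> A ^ 12) at_top"
    by (intro eventually_conj)
  from eventually_conj[OF eventually_ge_at_top eventually_compose_filterlim[OF this filterlim_real_sequentially]]
  show ?thesis .
qed

lemma prob_spec_norm_le_cubic:
  assumes a: "0 < a" "a < 2 * r0" and n: "12 \<le> n" "0 < dn" "1 \<le> dn * n" "dn / n \<le> (r0 + a/2)\<^sup>2"
    and A: "25 * (r0 + a/2)\<^sup>2 * real n ^ 4 * dn ^ 11 \<le> measure lborel (annulus r0 a) ^ 12"
  shows "1 - real n powr -3 \<le> measure (model r0 a p n)
    {\<omega> \<in> space (model r0 a p n). spec_norm n (P_E (snd \<omega>) (Dbar_s dn (fst \<omega>))) \<le> 275 * dn ^ 3 * n}"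
proof -
  have pos: "0 < r0 + a/2" "0 < measure lborel (annulus r0 a)" "0 < sqrt (dn / n)"
    using a n measure_annulus_pos[OF a] by simp_all
  have deg: "dn\<^sup>2 * real (11 * (nat (2 * \<lceil>dn / sqrt (dn / n)\<rceil> + 1))\<^sup>2) \<le> 275 * dn ^ 3 * n"
    using n by (intro degree_bound_le) auto
  have Suc_11_eq_12: "Suc 11 = 12"
    by simp
  note tail = prob_spec_norm_le[OF a pos(3) deg, of n p, unfolded Suc_11_eq_12]
  show ?thesis
    using tail crowding_bound_le[OF n(1,2) pos(1,2) n(4) A] by linarith
qed

theorem lemma3:
  fixes r0 a \<delta> p :: real
  assumes "r0 > 0" and "0 < a" and "a < 2 * r0"
    and "\<delta> > 0" and "0 < p" and "p \<le> 1"
  shows "\<exists>c. \<exists>N. \<forall>n \<ge> N.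
    measure (model r0 a p n)
      {\<omega> \<in> space (model r0 a p n).
         spec_norm n (P_E (snd \<omega>) (Dbar_s (delta_n \<delta> r0 n) (fst \<omega>)))
           \<le> c * \<delta>^3 * (r0 + a)\<^sup>2 * (sqrt (ln (real n) / real n))^3 * p * real n}
    \<ge> 1 - real n powr (-3)"
proof -
  define c where "c = 275 * r0 ^ 3 / ((r0 + a)\<^sup>2 * p)"
  have scale: "c * \<delta>^3 * (r0 + a)\<^sup>2 * (sqrt (ln (real n) / real n))^3 * p * real n
      = 275 * delta_n \<delta> r0 n ^ 3 * n" for n
    using assms by (simp add: c_def delta_n_def field_simps power_mult_distrib)
  have "0 < r0 + a/2" "0 < measure lborel (annulus r0 a)"
    using assms measure_annulus_pos[of a r0] by simp_all
  then have "\<forall>\<^sub>F n in sequentially. 12 \<le> n \<and> 1 \<le> delta_n \<delta> r0 n * n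
      \<and> delta_n \<delta> r0 n / n \<le> (r0 + a/2)\<^sup>2
      \<and> 25 * (r0 + a/2)\<^sup>2 * real n ^ 4 * delta_n \<delta> r0 n ^ 11 \<le> measure lborel (annulus r0 a) ^ 12"
    unfolding delta_n_def using assms by (intro eventually_sample_conditions) simp_all
  then have "\<forall>\<^sub>F n in sequentially. 1 - real n powr -3 \<le> measure (model r0 a p n)
      {\<omega> \<in> space (model r0 a p n). spec_norm n (P_E (snd \<omega>) (Dbar_s (delta_n \<delta> r0 n) (fst \<omega>)))
        \<le> c * \<delta>^3 * (r0 + a)\<^sup>2 * (sqrt (ln (real n) / real n))^3 * p * real n}"
    unfolding scale
    by eventually_elim (use assms in \<open>auto simp: delta_n_def intro!: prob_spec_norm_le_cubic\<close>)
  then show ?thesis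
    unfolding eventually_sequentially by auto
qed

end
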